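(* Assume $d_0\delta>2$, and let $\varepsilon_0=\frac{d_0}2-\frac1\delta>0$ and $t=\frac{d_0}{2}$. Let $G=(L\cup R,E)$ be a $(c,d,\alpha,\delta)$-bipartite expander with $L=[n]$, $C_0\subseteq\mathbb{F}_2^d$ a linear code of minimum distance $d_0$, and $x\in\mathbb{F}_2^n$, $y\in T(G,C_0)$ with $d_H(x,y)\le\alpha n$. Then there exists $q\in W\setminus\{0\}$ such that, with $x'=\mathsf{DeterFlip}(x,q)$, $|F(x',y)|\le\left(1-\frac{\varepsilon_0\delta}{2ct^2}\right)|F(x,y)|$.
   Context: A bipartite graph is $(c,d)$-regular if left degrees are $c$ and right degrees $d$; $N(S)$ is the neighborhood of $S$. A $(c,d,\alpha,\delta)$-bipartite expander ($\alpha,\delta\in(0,1]$) is a $(c,d)$-regular bipartite graph with $|N(S)|\ge\delta c|S|$ for all $S\subseteq L$, $|S|\le\alpha|L|$. Tanner code: $L=[n]$, for each $v\in R$ a fixed ordering of $N(v)$ defines $x_{N(v)}\in\mathbb{F}_2^d$, and $T(G,C_0)=\{x:x_{N(v)}\in C_0\ \forall v\in R\}$. $F(x,y)=\{i\in[n]:x_i\ne y_i\}$; $d_H$ is Hamming distance. $\mathsf{Decode}(z)$ is the codeword of $C_0$ closest to $z\in\mathbb{F}_2^d$, ties broken lexicographically. $W=\{\frac{i}{cd_0}:i\in\mathbb{Z},0\le i\le cd_0\}$. $\mathsf{DeterFlip}(x,q)$ for $q\in\mathbb{R}$: set $p_1=\dots=p_n=0$; for each $v\in R$, let $w_v=\mathsf{Decode}(x_{N(v)})$;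 if $1\le d_H(w_v,x_{N(v)})<t$, let $i$ be the smallest element of $N(v)$ where $w_v$ and $x_{N(v)}$ differ and increase $p_i$ by $\frac{t-d_H(w_v,x_{N(v)})}{ct}$; then flip every $x_i$ with $p_i=q$ and return the result. *)

theory Defs
  imports Complex_Main "HOL-Library.List_Lexorder"
begin

text \<open>Bipartite graph with left vertex set L = {..<n} (the paper's [n], 0-based)
 and right vertex set R = {..<m}. For each right vertex v, nbr v is the fixed
 ordering of its neighbourhood N(v) (a distinct list of left vertices).
 Vectors of F_2^n are functions nat => bool (only coordinates < n matter),
 words of F_2^d are bool lists of length d; addition is xor.\<close>

definition left_nbrs :: "nat \<Rightarrow> (nat \<Rightarrow> nat list) \<Rightarrow> nat \<Rightarrow> nat set" where
  "left_nbrs m nbr i = {v. v < m \<and> i \<in> set (nbr v)}"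

definition nbhd :: "nat \<Rightarrow> (nat \<Rightarrow> nat list) \<Rightarrow> nat set \<Rightarrow> nat set" where
  "nbhd m nbr S = {v. v < m \<and> set (nbr v) \<inter> S \<noteq> {}}"

definition bipartite_graph :: "nat \<Rightarrow> nat \<Rightarrow> (nat \<Rightarrow> nat list) \<Rightarrow> bool" where
  "bipartite_graph n m nbr \<longleftrightarrow> (\<forall>v<m. distinct (nbr v) \<and> set (nbr v) \<subseteq> {..<n})"

definition regular_bipartite :: "nat \<Rightarrow> nat \<Rightarrow> nat \<Rightarrow> nat \<Rightarrow> (nat \<Rightarrow> nat list) \<Rightarrow> bool" where
  "regular_bipartite c d n m nbr \<longleftrightarrow> bipartite_graph n m nbr \<and>
     (\<forall>i<n. card (left_nbrs m nbr i) = c) \<and> (\<forall>v<m. length (nbr v) = d)"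

definition bipartite_expander ::
  "nat \<Rightarrow> nat \<Rightarrow> real \<Rightarrow> real \<Rightarrow> nat \<Rightarrow> nat \<Rightarrow> (nat \<Rightarrow> nat list) \<Rightarrow> bool" where
  "bipartite_expander c d \<alpha> \<delta> n m nbr \<longleftrightarrow>
     0 < \<alpha> \<and> \<alpha> \<le> 1 \<and> 0 < \<delta> \<and> \<delta> \<le> 1 \<and> regular_bipartite c d n m nbr \<and>
     (\<forall>S. S \<subseteq> {..<n} \<longrightarrow> real (card S) \<le> \<alpha> * real n \<longrightarrow>
          real (card (nbhd m nbr S)) \<ge> \<delta> * real c * real (card S))"

definition hdist :: "bool list \<Rightarrow> bool list \<Rightarrow> nat" where
  "hdist u w = card {k. k < length u \<and> k < length w \<and> u ! k \<noteq> w ! k}"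

definition xorw :: "bool list \<Rightarrow> bool list \<Rightarrow> bool list" where
  "xorw u w = map2 (\<noteq>) u w"

definition linear_code :: "nat \<Rightarrow> bool list set \<Rightarrow> bool" where
  "linear_code d C \<longleftrightarrow> (\<forall>w\<in>C. length w = d) \<and> replicate d False \<in> C \<and>
     (\<forall>u\<in>C. \<forall>w\<in>C. xorw u w \<in> C)"

definition min_distance :: "bool list set \<Rightarrow> nat \<Rightarrow> bool" where
  "min_distance C d0 \<longleftrightarrow> (\<exists>u\<in>C. \<exists>w\<in>C. u \<noteq> w \<and> hdist u w = d0) \<and>
     (\<forall>u\<in>C. \<forall>w\<in>C. u \<noteq> w \<longrightarrow> d0 \<le> hdist u w)"

definition restrict_word :: "(nat \<Rightarrow> bool) \<Rightarrow> (nat \<Rightarrow> nat list) \<Rightarrow> nat \<Rightarrow> bool list" where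
  "restrict_word x nbr v = map x (nbr v)"

definition tanner_code :: "nat \<Rightarrow> nat \<Rightarrow> (nat \<Rightarrow> nat list) \<Rightarrow> bool list set \<Rightarrow> (nat \<Rightarrow> bool) set" where
  "tanner_code n m nbr C0 = {x. \<forall>v<m. restrict_word x nbr v \<in> C0}"

definition flips :: "nat \<Rightarrow> (nat \<Rightarrow> bool) \<Rightarrow> (nat \<Rightarrow> bool) \<Rightarrow> nat set" where
  "flips n x y = {i. i < n \<and> x i \<noteq> y i}"

text \<open>Closest codeword, ties broken lexicographically (False < True).\<close>
definition decode :: "bool list set \<Rightarrow> bool list \<Rightarrow> bool list" where
  "decode C z = (let M = {w \<in> C. \<forall>w'\<in>C. hdist w z \<le> hdist w' z}
                 in THE w. w \<in> M \<and> (\<forall>w'\<in>M. w \<le> w'))"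

definition W_set :: "nat \<Rightarrow> nat \<Rightarrow> real set" where
  "W_set c d0 = {real i / (real c * real d0) | i. i \<le> c * d0}"

definition flip_weight ::
  "nat \<Rightarrow> real \<Rightarrow> nat \<Rightarrow> (nat \<Rightarrow> nat list) \<Rightarrow> bool list set \<Rightarrow> (nat \<Rightarrow> bool) \<Rightarrow> nat \<Rightarrow> real" where
  "flip_weight c t m nbr C0 x i =
     (\<Sum>v<m. let z = restrict_word x nbr v; w = decode C0 z; e = hdist w z in
        if 1 \<le> e \<and> real e < t \<and>
           i = Min {nbr v ! k | k. k < length (nbr v) \<and> w ! k \<noteq> z ! k}
        then (t - real e) / (real c * t) else 0)"

definition deter_flip ::
  "nat \<Rightarrow> nat \<Rightarrow> real \<Rightarrow> nat \<Rightarrow> (nat \<Rightarrow> nat list) \<Rightarrow> bool list set \<Rightarrow> (nat \<Rightarrow> bool) \<Rightarrow> real \<Rightarrow> (nat \<Rightarrow> bool)" where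
  "deter_flip n c t m nbr C0 x q =
     (\<lambda>i. if i < n \<and> flip_weight c t m nbr C0 x i = q then \<not> x i else x i)"

end

theory Submission
  imports Defs
begin

text \<open>Call F the set of wrong bits, let p i be the weight that DeterFlip
  gives to bit i, and let bit i gain +1 if it is wrong and -1 otherwise. A check seeing e' \<ge> 1
  wrong bits adds at least (t - e')/(c t) to the potential \<Sum>i. gain i * p i: if it decodes
  correctly it votes for a wrong bit, and otherwise the minimum distance makes e' large enough to
  pay for a wrong vote. Summing over the checks, using \<Sum>v. e' v = c |F| and the expansion
  |N(F)| \<ge> \<delta> c |F|, bounds the potential below by (\<delta> - 1/t) |F|. Since every p i lies in W,
  whose nonzero elements are at most c d0 numbers in (0, 1], the potential is \<Sum>q. q * G q, where
  G q is the total gain of the bits of weight q. Hence some q has G q \<ge> (\<delta> - 1/t) |F| / (c d0),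
  and flipping exactly the bits of weight q shrinks F by G q.\<close>

lemma sum_mult_eq_sum_level_sets:
  fixes g p :: "'a \<Rightarrow> real"
  assumes "finite A" "finite W" "p ` A \<subseteq> W"
  shows "(\<Sum>i\<in>A. g i * p i) = (\<Sum>q\<in>W - {0}. q * (\<Sum>i\<in>{i \<in> A. p i = q}. g i))"
proof -
  have "(\<Sum>i\<in>A. g i * p i) = (\<Sum>q\<in>W. \<Sum>i\<in>{i \<in> A. p i = q}. g i * p i)"
    by (rule sum.group[OF assms, symmetric])
  also have "\<dots> = (\<Sum>q\<in>W. q * (\<Sum>i\<in>{i \<in> A. p i = q}. g i))"
    by (auto simp: sum_distrib_left mult.commute intro!: sum.cong)
  also have "\<dots> = (\<Sum>q\<in>W - {0}. q * (\<Sum>i\<in>{i \<in> A. p i = q}. g i))"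
    using assms(2) by (intro sum.mono_neutral_right) auto
  finally show ?thesis .
qed

lemma exists_ge_sum_div_card_bound:
  fixes f :: "'a \<Rightarrow> real"
  assumes "finite A" "A \<noteq> {}" "card A \<le> N" "0 \<le> b" "b \<le> sum f A"
  shows "\<exists>a\<in>A. b / real N \<le> f a"
proof (rule ccontr)
  assume "\<not> ?thesis"
  have "0 < card A" using assms(1,2) by (simp add: card_gt_0_iff)
  with \<open>\<not> ?thesis\<close> have "sum f A < real (card A) * (b / real N)"
    by (intro sum_bounded_above_strict) auto
  also have "\<dots> \<le> real N * (b / real N)"
    using assms(3,4) by (intro mult_right_mono) auto
  also have "\<dots> = b" using \<open>0 < card A\<close> assms(3) by simp
  finally show False using assms(5) by simp
qed

lemma hdist_commute: "hdist u w = hdist w u"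
  unfolding hdist_def by (metis (mono_tags, lifting))

lemma hdist_triangle:
  assumes "length a = length b" "length b = length c"
  shows "hdist a c \<le> hdist a b + hdist b c"
proof -
  let ?D = "\<lambda>u w. {k. k < length u \<and> k < length w \<and> u ! k \<noteq> w ! k}"
  have "hdist a c \<le> card (?D a b \<union> ?D b c)"
    unfolding hdist_def using assms by (intro card_mono) auto
  also have "\<dots> \<le> hdist a b + hdist b c"
    unfolding hdist_def by (rule card_Un_le)
  finally show ?thesis .
qed

lemma hdist_map_distinct:
  assumes "distinct l"
  shows "hdist (map y l) (map x l) = card (set l \<inter> {i. x i \<noteq> y i})"
proof -
  let ?K = "{k. k < length l \<and> y (l ! k) \<noteq> x (l ! k)}"
  have "hdist (map y l) (map x l) = card ?K"
    unfolding hdist_def by (rule arg_cong[where f = card]) auto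
  also have "\<dots> = card ((!) l ` ?K)"
    using assms by (intro card_image[symmetric] inj_on_nth) auto
  also have "(!) l ` ?K = set l \<inter> {i. x i \<noteq> y i}"
    by (auto simp: in_set_conv_nth)
  finally show ?thesis .
qed

lemma hdist_pos_imp_Min_disagreement:
  assumes "1 \<le> hdist w (map x l)"
  shows "\<exists>k<length l. Min {l ! k | k. k < length l \<and> w ! k \<noteq> map x l ! k} = l ! k
           \<and> w ! k \<noteq> x (l ! k)"
proof -
  let ?K = "{l ! k | k. k < length l \<and> w ! k \<noteq> map x l ! k}"
  have "?K = (!) l ` {k. k < length l \<and> w ! k \<noteq> map x l ! k}" by auto
  then have "finite ?K" by simp
  have "{k. k < length w \<and> k < length (map x l) \<and> w ! k \<noteq> map x l ! k} \<noteq> {}"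
    using assms unfolding hdist_def by (metis card.empty not_one_le_zero)
  then have "?K \<noteq> {}" by auto
  with \<open>finite ?K\<close> have "Min ?K \<in> ?K" by (rule Min_in)
  then obtain k where "k < length l" "Min ?K = l ! k" "w ! k \<noteq> map x l ! k" by blast
  then show ?thesis by auto
qed

lemma decode_nearest:
  assumes "finite C" "C \<noteq> {}"
  shows "decode C z \<in> C" "\<And>w. w \<in> C \<Longrightarrow> hdist (decode C z) z \<le> hdist w z"
proof -
  define M where "M = {w \<in> C. \<forall>w'\<in>C. hdist w z \<le> hdist w' z}"
  have "finite M" unfolding M_def using assms(1) by simp
  moreover have "M \<noteq> {}"
  proof -
    obtain u where "u \<in> C" using assms(2) by blast
    then obtain w0 where "w0 \<in> C \<and> (\<forall>w. w \<in> C \<longrightarrow> hdist w0 z \<le> hdist w z)"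
      using ex_has_least_nat[of "\<lambda>w. w \<in> C" u "\<lambda>w. hdist w z"] by blast
    then have "w0 \<in> M" unfolding M_def by auto
    then show ?thesis by auto
  qed
  ultimately have "decode C z = Min M"
    unfolding decode_def Let_def M_def[symmetric]
    by (intro the_equality) (auto intro: Min_in Min_le order_antisym)
  with \<open>finite M\<close> \<open>M \<noteq> {}\<close> have "decode C z \<in> M" by simp
  then show "decode C z \<in> C" "\<And>w. w \<in> C \<Longrightarrow> hdist (decode C z) z \<le> hdist w z"
    unfolding M_def by auto
qed

lemma decode_eq_or_far:
  assumes "finite C" "u \<in> C" "\<And>w. w \<in> C \<Longrightarrow> length w = length z"
    and "\<And>a b. a \<in> C \<Longrightarrow> b \<in> C \<Longrightarrow> a \<noteq> b \<Longrightarrow> d0 \<le> hdist a b"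
  shows "decode C z = u \<or> d0 \<le> hdist (decode C z) z + hdist u z"
proof -
  have "d0 \<le> hdist (decode C z) z + hdist u z" if "decode C z \<noteq> u"
  proof -
    have "decode C z \<in> C" using assms(1,2) decode_nearest by blast
    with that have "d0 \<le> hdist (decode C z) u" using assms by blast
    also have "\<dots> \<le> hdist (decode C z) z + hdist z u"
      using assms \<open>decode C z \<in> C\<close> by (intro hdist_triangle) auto
    finally show ?thesis by (simp add: hdist_commute)
  qed
  then show ?thesis by blast
qed

lemma linear_code_finite:
  assumes "linear_code d C"
  shows "finite C"
proof (rule finite_subset)
  show "C \<subseteq> {w. set w \<subseteq> UNIV \<and> length w = d}"
    using assms unfolding linear_code_def by auto
  show "finite {w. set w \<subseteq> (UNIV :: bool set) \<and> length w = d}"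
    by (rule finite_lists_length_eq) simp
qed

lemma W_set_eq_image: "W_set c d0 = (\<lambda>j. real j / (real c * real d0)) ` {..c * d0}"
  unfolding W_set_def by auto

lemma W_set_subset_unit_interval: "W_set c d0 \<subseteq> {0..1}"
  unfolding W_set_eq_image by (auto simp: divide_le_eq_1 simp flip: of_nat_mult)

lemma card_W_set_Diff_zero: "card (W_set c d0 - {0}) \<le> c * d0"
proof -
  have "card (W_set c d0) \<le> card {..c * d0}"
    unfolding W_set_eq_image by (rule card_image_le) simp
  moreover have "0 \<in> W_set c d0" unfolding W_set_eq_image by force
  ultimately show ?thesis unfolding W_set_eq_image by (simp add: card_Diff_singleton)
qed

lemma one_in_W_set: "c \<ge> 1 \<Longrightarrow> d0 \<ge> 1 \<Longrightarrow> 1 \<in> W_set c d0"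
  unfolding W_set_def by (rule CollectI, rule exI[of _ "c * d0"]) simp

definition check_error :: "(nat \<Rightarrow> nat list) \<Rightarrow> bool list set \<Rightarrow> (nat \<Rightarrow> bool) \<Rightarrow> nat \<Rightarrow> nat" where
  "check_error nbr C0 x v = hdist (decode C0 (restrict_word x nbr v)) (restrict_word x nbr v)"

definition check_target :: "(nat \<Rightarrow> nat list) \<Rightarrow> bool list set \<Rightarrow> (nat \<Rightarrow> bool) \<Rightarrow> nat \<Rightarrow> nat" where
  "check_target nbr C0 x v =
     (let z = restrict_word x nbr v; w = decode C0 z
      in Min {nbr v ! k | k. k < length (nbr v) \<and> w ! k \<noteq> z ! k})"

definition check_vote ::
  "nat \<Rightarrow> real \<Rightarrow> (nat \<Rightarrow> nat list) \<Rightarrow> bool list set \<Rightarrow> (nat \<Rightarrow> bool) \<Rightarrow> nat \<Rightarrow> real" where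
  "check_vote c t nbr C0 x v =
     (let e = check_error nbr C0 x v
      in if 1 \<le> e \<and> real e < t then (t - real e) / (real c * t) else 0)"

lemma flip_weight_eq_sum_check_vote:
  "flip_weight c t m nbr C0 x i =
     (\<Sum>v<m. if check_target nbr C0 x v = i then check_vote c t nbr C0 x v else 0)"
  unfolding flip_weight_def check_target_def check_vote_def check_error_def Let_def
  by (intro sum.cong) auto

lemma check_target_disagreement:
  assumes "check_vote c t nbr C0 x v \<noteq> 0"
  shows "\<exists>k<length (nbr v). check_target nbr C0 x v = nbr v ! k
           \<and> decode C0 (restrict_word x nbr v) ! k \<noteq> x (nbr v ! k)"
proof -
  have "1 \<le> hdist (decode C0 (restrict_word x nbr v)) (map x (nbr v))"
    using assms unfolding check_vote_def check_error_def Let_def restrict_word_def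
    by (auto split: if_splits)
  then show ?thesis
    unfolding check_target_def Let_def restrict_word_def by (rule hdist_pos_imp_Min_disagreement)
qed

lemma check_target_in_nbr:
  "check_vote c t nbr C0 x v \<noteq> 0 \<Longrightarrow> check_target nbr C0 x v \<in> set (nbr v)"
  using check_target_disagreement by fastforce

definition flip_gain :: "nat set \<Rightarrow> nat \<Rightarrow> real" where
  "flip_gain F i = (if i \<in> F then 1 else -1)"

lemma card_flips_flip_set:
  assumes "S \<subseteq> {..<n}"
  shows "real (card (flips n (\<lambda>i. if i \<in> S then \<not> x i else x i) y))
           = real (card (flips n x y)) - (\<Sum>i\<in>S. flip_gain (flips n x y) i)"
proof -
  define F where "F = flips n x y"
  have fin: "finite F" "finite S"
    using finite_subset[OF assms] unfolding F_def flips_def by auto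
  have flipped: "flips n (\<lambda>i. if i \<in> S then \<not> x i else x i) y = (F - S) \<union> (S - F)"
    using assms unfolding F_def flips_def by auto
  have new: "card (flips n (\<lambda>i. if i \<in> S then \<not> x i else x i) y) = card (F - S) + card (S - F)"
    unfolding flipped using fin by (intro card_Un_disjoint) auto
  have old: "card F = card (S \<inter> F) + card (F - S)"
    using card_Int_Diff[OF fin(1), of S] by (simp add: Int_commute)
  have "(\<Sum>i\<in>S. flip_gain F i) = real (card (S \<inter> F)) - real (card (S - F))"
    unfolding flip_gain_def sum.If_cases[OF fin(2)] by (simp add: Diff_eq)
  with new old show ?thesis unfolding F_def[symmetric] by simp
qed

lemma card_flips_deter_flip:
  "real (card (flips n (deter_flip n c t m nbr C0 x q) y))
     = real (card (flips n x y))
       - (\<Sum>i\<in>{i \<in> {..<n}. flip_weight c t m nbr C0 x i = q}. flip_gain (flips n x y) i)"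
proof -
  have "deter_flip n c t m nbr C0 x q
      = (\<lambda>i. if i \<in> {i \<in> {..<n}. flip_weight c t m nbr C0 x i = q} then \<not> x i else x i)"
    unfolding deter_flip_def by auto
  then show ?thesis by (simp only:) (rule card_flips_flip_set, auto)
qed

lemma neg_vote_ge_of_far:
  fixes e e' :: nat and c t :: real
  assumes "0 < c * t" "e \<le> e'" "2 * t \<le> real e + real e'"
  shows "(t - real e') / (c * t) \<le> - (if 1 \<le> e \<and> real e < t then (t - real e) / (c * t) else 0)"
proof (cases "1 \<le> e \<and> real e < t")
  case True
  have "(t - real e') / (c * t) \<le> (real e - t) / (c * t)"
    using assms(1,3) by (intro divide_right_mono) auto
  then show ?thesis using True by (simp add: minus_divide_left)
next
  case False
  have "t \<le> real e'" using assms(2,3) by linarith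
  then show ?thesis using False assms(1) by (simp only: if_False) (simp add: divide_nonpos_pos)
qed

text \<open>One check, with e its decoding distance, e' its number of wrong bits and g the gain of
  the bit it votes for. The first alternative is a check decoding to the restriction of y, which
  can only vote for a wrong bit; in the second it decodes to another codeword, and then a harmful
  vote (t - e)/(c t) is paid for by (e' - t)/(c t).\<close>
lemma signed_vote_ge:
  fixes e e' :: nat and c t g :: real
  assumes "0 < c" "0 < t" "e \<le> e'" "g = 1 \<or> g = -1"
    and "(e = e' \<and> (1 \<le> e \<and> real e < t \<longrightarrow> g = 1)) \<or> 2 * t \<le> real e + real e'"
  shows "(if e' = 0 then 0 else 1 / c) - real e' / (c * t)
           \<le> g * (if 1 \<le> e \<and> real e < t then (t - real e) / (c * t) else 0)"
    (is "?lower \<le> g * ?vote")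
proof -
  have ct: "0 < c * t" using assms(1,2) by simp
  have lower: "?lower \<le> (t - real e') / (c * t)"
    using ct assms(1) by (auto simp: diff_divide_distrib)
  have vote: "0 \<le> ?vote" using ct by simp
  consider (exact) "e = e'" "1 \<le> e \<and> real e < t \<longrightarrow> g = 1"
    | (far) "2 * t \<le> real e + real e'"
    using assms(5) by blast
  then show ?thesis
  proof cases
    case exact
    show ?thesis
    proof (cases "1 \<le> e \<and> real e < t")
      case True
      then show ?thesis using lower exact by simp
    next
      case False
      then have "e' = 0 \<or> t \<le> real e'" using exact by linarith
      then have "?lower \<le> 0"
      proof
        assume "t \<le> real e'"
        then have "(t - real e') / (c * t) \<le> 0" using ct by (simp add: divide_nonpos_pos)
        then show ?thesis using lower by linarith
      qed simp
      moreover have "?vote = 0" using False by (simp only: if_False)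
      ultimately show ?thesis by simp
    qed
  next
    case far
    have "g * ?vote = ?vote \<or> g * ?vote = - ?vote" using assms(4) by auto
    then have "- ?vote \<le> g * ?vote" using vote by linarith
    moreover have "(t - real e') / (c * t) \<le> - ?vote"
      using neg_vote_ge_of_far[OF ct assms(3) far] .
    ultimately show ?thesis using lower by linarith
  qed
qed

lemma check_target_in_flips:
  assumes "set (nbr v) \<subseteq> {..<n}" "decode C0 (restrict_word x nbr v) = restrict_word y nbr v"
    and "check_vote c t nbr C0 x v \<noteq> 0"
  shows "check_target nbr C0 x v \<in> flips n x y"
proof -
  obtain k where "k < length (nbr v)" "check_target nbr C0 x v = nbr v ! k"
      "decode C0 (restrict_word x nbr v) ! k \<noteq> x (nbr v ! k)"
    using check_target_disagreement[OF assms(3)] by blast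
  then show ?thesis
    using assms(1,2) unfolding restrict_word_def flips_def by (auto simp: set_conv_nth)
qed

lemma check_error_bounds:
  assumes "regular_bipartite c d n m nbr" "v < m"
    and "linear_code d C0" "min_distance C0 d0" "y \<in> tanner_code n m nbr C0"
  shows "check_error nbr C0 x v \<le> card (set (nbr v) \<inter> flips n x y)"
    and "decode C0 (restrict_word x nbr v) = restrict_word y nbr v
           \<and> check_error nbr C0 x v = card (set (nbr v) \<inter> flips n x y)
         \<or> d0 \<le> check_error nbr C0 x v + card (set (nbr v) \<inter> flips n x y)"
proof -
  define z where "z = restrict_word x nbr v"
  define u where "u = restrict_word y nbr v"
  have nbr_v: "distinct (nbr v)" "set (nbr v) \<subseteq> {..<n}" "length (nbr v) = d"
    using assms(1,2) unfolding regular_bipartite_def bipartite_graph_def by auto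
  have C0: "finite C0" "\<And>w. w \<in> C0 \<Longrightarrow> length w = length z"
    using assms(3) linear_code_finite nbr_v(3)
    unfolding linear_code_def z_def restrict_word_def by auto
  have "u \<in> C0" using assms(2,5) unfolding tanner_code_def u_def by auto
  have "set (nbr v) \<inter> {i. x i \<noteq> y i} = set (nbr v) \<inter> flips n x y"
    using nbr_v(2) unfolding flips_def by auto
  then have e': "hdist u z = card (set (nbr v) \<inter> flips n x y)"
    unfolding u_def z_def restrict_word_def using hdist_map_distinct[OF nbr_v(1)] by simp
  have e: "check_error nbr C0 x v = hdist (decode C0 z) z"
    unfolding check_error_def z_def ..
  show "check_error nbr C0 x v \<le> card (set (nbr v) \<inter> flips n x y)"
    using decode_nearest(2)[OF C0(1) _ \<open>u \<in> C0\<close>, of z] \<open>u \<in> C0\<close> e e' by auto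
  have "decode C0 z = u \<or> d0 \<le> hdist (decode C0 z) z + hdist u z"
    using decode_eq_or_far[OF C0(1) \<open>u \<in> C0\<close> C0(2)] assms(4)
    unfolding min_distance_def by blast
  then show "decode C0 (restrict_word x nbr v) = restrict_word y nbr v
           \<and> check_error nbr C0 x v = card (set (nbr v) \<inter> flips n x y)
         \<or> d0 \<le> check_error nbr C0 x v + card (set (nbr v) \<inter> flips n x y)"
    using e e' unfolding z_def u_def by auto
qed

lemma check_vote_gain_ge:
  assumes "regular_bipartite c d n m nbr" "v < m" "c \<ge> 1"
    and "linear_code d C0" "min_distance C0 d0" "y \<in> tanner_code n m nbr C0"
    and "0 < t" "2 * t \<le> real d0"
  shows "(if set (nbr v) \<inter> flips n x y = {} then 0 else 1 / real c)
           - real (card (set (nbr v) \<inter> flips n x y)) / (real c * t)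
         \<le> flip_gain (flips n x y) (check_target nbr C0 x v) * check_vote c t nbr C0 x v"
proof -
  let ?e = "check_error nbr C0 x v" and ?e' = "card (set (nbr v) \<inter> flips n x y)"
    and ?g = "flip_gain (flips n x y) (check_target nbr C0 x v)"
  have vote: "check_vote c t nbr C0 x v
      = (if 1 \<le> ?e \<and> real ?e < t then (t - real ?e) / (real c * t) else 0)"
    unfolding check_vote_def Let_def ..
  have nbr_v: "set (nbr v) \<subseteq> {..<n}"
    using assms(1,2) unfolding regular_bipartite_def bipartite_graph_def by auto
  have voting: "check_vote c t nbr C0 x v \<noteq> 0 \<longleftrightarrow> 1 \<le> ?e \<and> real ?e < t"
    using vote assms(3,7) by auto
  have "(?e = ?e' \<and> (1 \<le> ?e \<and> real ?e < t \<longrightarrow> ?g = 1)) \<or> 2 * t \<le> real ?e + real ?e'"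
    using check_error_bounds(2)[OF assms(1,2,4-6), of x]
  proof (elim disjE conjE)
    assume "decode C0 (restrict_word x nbr v) = restrict_word y nbr v" "?e = ?e'"
    then show ?thesis
      using check_target_in_flips[where nbr = nbr and v = v, OF nbr_v] voting
      unfolding flip_gain_def by auto
  next
    assume "d0 \<le> ?e + ?e'"
    then have "real d0 \<le> real ?e + real ?e'" by (metis of_nat_add of_nat_le_iff)
    then show ?thesis using assms(8) by linarith
  qed
  moreover have "?g = 1 \<or> ?g = -1" unfolding flip_gain_def by simp
  moreover have "0 < real c" using assms(3) by simp
  ultimately have "(if ?e' = 0 then 0 else 1 / real c) - real ?e' / (real c * t)
      \<le> ?g * check_vote c t nbr C0 x v"
    unfolding vote using signed_vote_ge check_error_bounds(1)[OF assms(1,2,4-6)] assms(7) by blast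
  moreover have "(?e' = 0) = (set (nbr v) \<inter> flips n x y = {})" by simp
  ultimately show ?thesis by simp
qed

lemma sum_mult_flip_weight_eq_sum_check_vote:
  assumes "bipartite_graph n m nbr"
  shows "(\<Sum>i<n. g i * flip_weight c t m nbr C0 x i)
           = (\<Sum>v<m. g (check_target nbr C0 x v) * check_vote c t nbr C0 x v)"
proof -
  let ?target = "check_target nbr C0 x" and ?vote = "check_vote c t nbr C0 x"
  have "(\<Sum>i<n. g i * flip_weight c t m nbr C0 x i)
          = (\<Sum>i<n. \<Sum>v<m. if ?target v = i then g i * ?vote v else 0)"
    unfolding flip_weight_eq_sum_check_vote sum_distrib_left by (intro sum.cong) auto
  also have "\<dots> = (\<Sum>v<m. \<Sum>i<n. if ?target v = i then g i * ?vote v else 0)"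
    by (rule sum.swap)
  also have "\<dots> = (\<Sum>v<m. g (?target v) * ?vote v)"
  proof (rule sum.cong[OF refl])
    fix v assume "v \<in> {..<m}"
    then have "?vote v \<noteq> 0 \<Longrightarrow> ?target v < n"
      using assms check_target_in_nbr unfolding bipartite_graph_def by blast
    then show "(\<Sum>i<n. if ?target v = i then g i * ?vote v else 0) = g (?target v) * ?vote v"
      by auto
  qed
  finally show ?thesis .
qed

lemma sum_card_nbr_Int:
  assumes "regular_bipartite c d n m nbr" "F \<subseteq> {..<n}"
  shows "(\<Sum>v<m. card (set (nbr v) \<inter> F)) = c * card F"
proof -
  have "finite F" using assms(2) finite_subset by blast
  have "(\<Sum>v<m. card (set (nbr v) \<inter> F)) = (\<Sum>v\<in>{..<m}. \<Sum>i\<in>{i. i \<in> F \<and> i \<in> set (nbr v)}. 1)"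
    by (intro sum.cong) (auto intro: arg_cong[where f = card])
  also have "\<dots> = (\<Sum>i\<in>F. \<Sum>v\<in>{v. v \<in> {..<m} \<and> i \<in> set (nbr v)}. 1)"
    using \<open>finite F\<close> by (rule sum.swap_restrict[OF finite_lessThan])
  also have "\<dots> = (\<Sum>i\<in>F. card (left_nbrs m nbr i))"
    unfolding left_nbrs_def by simp
  also have "\<dots> = c * card F"
    using assms unfolding regular_bipartite_def by (simp add: subset_iff)
  finally show ?thesis .
qed

lemma sum_flip_gain_flip_weight_ge:
  assumes "regular_bipartite c d n m nbr" "c \<ge> 1"
    and "linear_code d C0" "min_distance C0 d0" "y \<in> tanner_code n m nbr C0"
    and "0 < t" "2 * t \<le> real d0"
  shows "real (card (nbhd m nbr (flips n x y))) / real c - real (card (flips n x y)) / t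
           \<le> (\<Sum>i<n. flip_gain (flips n x y) i * flip_weight c t m nbr C0 x i)"
proof -
  define F where "F = flips n x y"
  have "F \<subseteq> {..<n}" unfolding F_def flips_def by auto
  have "nbhd m nbr F = {..<m} \<inter> - {v. set (nbr v) \<inter> F = {}}"
    unfolding nbhd_def by auto
  then have "(\<Sum>v<m. if set (nbr v) \<inter> F = {} then 0 else 1 / real c)
               = real (card (nbhd m nbr F)) / real c"
    by (simp add: sum.If_cases)
  moreover have "(\<Sum>v<m. real (card (set (nbr v) \<inter> F)) / (real c * t)) = real (card F) / t"
    using sum_card_nbr_Int[OF assms(1) \<open>F \<subseteq> {..<n}\<close>] assms(2)
    by (simp flip: sum_divide_distrib of_nat_sum)
  ultimately have "real (card (nbhd m nbr F)) / real c - real (card F) / t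
      = (\<Sum>v<m. (if set (nbr v) \<inter> F = {} then 0 else 1 / real c)
                  - real (card (set (nbr v) \<inter> F)) / (real c * t))"
    by (simp add: sum_subtractf)
  also have "\<dots> \<le> (\<Sum>v<m. flip_gain F (check_target nbr C0 x v) * check_vote c t nbr C0 x v)"
    unfolding F_def using check_vote_gain_ge[OF assms(1) _ assms(2-7)] by (intro sum_mono) simp
  also have "\<dots> = (\<Sum>i<n. flip_gain F i * flip_weight c t m nbr C0 x i)"
    using assms(1) unfolding regular_bipartite_def
    by (simp add: sum_mult_flip_weight_eq_sum_check_vote)
  finally show ?thesis unfolding F_def .
qed

lemma sum_flip_gain_flip_weight_ge_expansion:
  assumes "bipartite_expander c d \<alpha> \<delta> n m nbr" "c \<ge> 1"
    and "linear_code d C0" "min_distance C0 d0" "y \<in> tanner_code n m nbr C0"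
    and "0 < t" "2 * t \<le> real d0" "real (card (flips n x y)) \<le> \<alpha> * real n"
  shows "(\<delta> - 1 / t) * real (card (flips n x y))
           \<le> (\<Sum>i<n. flip_gain (flips n x y) i * flip_weight c t m nbr C0 x i)"
proof -
  have "flips n x y \<subseteq> {..<n}" unfolding flips_def by auto
  then have "\<delta> * real c * real (card (flips n x y)) \<le> real (card (nbhd m nbr (flips n x y)))"
    using assms(1,8) unfolding bipartite_expander_def by blast
  then have "(\<delta> - 1 / t) * real (card (flips n x y))
      \<le> real (card (nbhd m nbr (flips n x y))) / real c - real (card (flips n x y)) / t"
    using assms(2) by (simp add: field_simps)
  also have "\<dots> \<le> (\<Sum>i<n. flip_gain (flips n x y) i * flip_weight c t m nbr C0 x i)"
    using assms(1) unfolding bipartite_expander_def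
    by (intro sum_flip_gain_flip_weight_ge) (use assms in auto)
  finally show ?thesis .
qed

text \<open>With t = d0/2 every vote is a multiple of 1/(c d0), and bit i collects at most
  c votes, each at most d0/(c d0).\<close>
lemma flip_weight_in_W_set:
  assumes "regular_bipartite c d n m nbr" "i < n"
  shows "flip_weight c (real d0 / 2) m nbr C0 x i \<in> W_set c d0"
proof -
  let ?t = "real d0 / 2" and ?target = "check_target nbr C0 x"
    and ?vote = "check_vote c (real d0 / 2) nbr C0 x" and ?e = "check_error nbr C0 x"
  define a where "a v = (if ?target v = i \<and> ?vote v \<noteq> 0 then d0 - 2 * ?e v else 0)" for v
  have vote: "(if ?target v = i then ?vote v else 0) = real (a v) / (real c * real d0)" for v
  proof (cases "?target v = i \<and> ?vote v \<noteq> 0")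
    case True
    then have "1 \<le> ?e v" "2 * real (?e v) < real d0" "c \<noteq> 0"
      and "?vote v = (?t - real (?e v)) / (real c * ?t)"
      unfolding check_vote_def Let_def by (auto split: if_splits)
    then show ?thesis using True unfolding a_def by (simp add: of_nat_diff field_simps)
  qed (auto simp: a_def)
  have "(\<Sum>v<m. a v) = (\<Sum>v\<in>left_nbrs m nbr i. a v)"
  proof (rule sum.mono_neutral_right)
    show "\<forall>v\<in>{..<m} - left_nbrs m nbr i. a v = 0"
    proof
      fix v assume "v \<in> {..<m} - left_nbrs m nbr i"
      then show "a v = 0"
        using check_target_in_nbr[of c ?t nbr C0 x v] unfolding a_def left_nbrs_def by auto
    qed
  qed (auto simp: left_nbrs_def)
  also have "\<dots> \<le> (\<Sum>v\<in>left_nbrs m nbr i. d0)"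
    unfolding a_def by (intro sum_mono) auto
  also have "\<dots> = c * d0"
    using assms unfolding regular_bipartite_def by simp
  finally have "(\<Sum>v<m. a v) \<le> c * d0" .
  moreover have "flip_weight c ?t m nbr C0 x i = real (\<Sum>v<m. a v) / (real c * real d0)"
    unfolding flip_weight_eq_sum_check_vote vote of_nat_sum sum_divide_distrib ..
  ultimately show ?thesis unfolding W_set_def by blast
qed

lemma exists_flip_level_ge:
  fixes g :: "nat \<Rightarrow> real"
  assumes "regular_bipartite c d n m nbr" "c \<ge> 1" "d0 \<ge> 1" "0 \<le> b"
    and "b \<le> (\<Sum>i<n. g i * flip_weight c (real d0 / 2) m nbr C0 x i)"
  shows "\<exists>q\<in>W_set c d0 - {0}.
           b / real (c * d0) \<le> (\<Sum>i\<in>{i \<in> {..<n}. flip_weight c (real d0 / 2) m nbr C0 x i = q}. g i)"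
proof -
  define p where "p = flip_weight c (real d0 / 2) m nbr C0 x"
  define level where "level q = (\<Sum>i\<in>{i \<in> {..<n}. p i = q}. g i)" for q
  have "b \<le> (\<Sum>q\<in>W_set c d0 - {0}. q * level q)"
    using assms(5) flip_weight_in_W_set[OF assms(1)] unfolding level_def p_def
    by (subst (asm) sum_mult_eq_sum_level_sets) (auto simp: W_set_eq_image)
  moreover have "W_set c d0 - {0} \<noteq> {}" using one_in_W_set[OF assms(2,3)] by auto
  moreover have "finite (W_set c d0 - {0})" unfolding W_set_eq_image by simp
  ultimately obtain q where q: "q \<in> W_set c d0 - {0}" "b / real (c * d0) \<le> q * level q"
    using exists_ge_sum_div_card_bound[OF _ _ card_W_set_Diff_zero assms(4),
        where f = "\<lambda>q. q * level q"]
    by blast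
  have "0 < q" "q \<le> 1" using q(1) W_set_subset_unit_interval by fastforce+
  have "0 \<le> b / real (c * d0)" using assms(4) by simp
  then have "0 \<le> q * level q" using q(2) by linarith
  then have "0 \<le> level q" using \<open>0 < q\<close> by (simp add: zero_le_mult_iff)
  then have "b / real (c * d0) \<le> level q"
    using q(2) mult_left_le_one_le[OF _ _ \<open>q \<le> 1\<close>] \<open>0 < q\<close> by fastforce
  with q(1) show ?thesis unfolding level_def p_def by blast
qed

theorem corollary4p2:
  fixes c d n m d0 :: nat and \<alpha> \<delta> :: real
    and nbr :: "nat \<Rightarrow> nat list" and C0 :: "bool list set" and x y :: "nat \<Rightarrow> bool"
  assumes "c \<ge> 1"
    and "real d0 * \<delta> > 2"
    and "bipartite_expander c d \<alpha> \<delta> n m nbr"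
    and "linear_code d C0" and "min_distance C0 d0"
    and "y \<in> tanner_code n m nbr C0"
    and "real (card (flips n x y)) \<le> \<alpha> * real n"
  shows "\<exists>q \<in> W_set c d0 - {0}.
           real (card (flips n (deter_flip n c (real d0 / 2) m nbr C0 x q) y))
           \<le> (1 - ((real d0 / 2 - 1 / \<delta>) * \<delta>) / (2 * real c * (real d0 / 2)^2))
              * real (card (flips n x y))"
proof -
  define t where "t = real d0 / 2"
  define F where "F = flips n x y"
  have reg: "regular_bipartite c d n m nbr" and "0 < \<delta>" "\<delta> \<le> 1"
    using assms(3) unfolding bipartite_expander_def by auto
  then have "real d0 * \<delta> \<le> real d0" by (simp add: mult_left_le)
  then have "1 < t" "1 \<le> d0" "1 < t * \<delta>" using assms(2) unfolding t_def by auto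
  then have "1 / t < \<delta>" by (simp add: divide_less_eq mult.commute)
  then have "0 \<le> (\<delta> - 1 / t) * real (card F)" by simp
  moreover have "(\<delta> - 1 / t) * real (card F) \<le> (\<Sum>i<n. flip_gain F i * flip_weight c t m nbr C0 x i)"
    unfolding F_def using \<open>1 < t\<close>
    by (intro sum_flip_gain_flip_weight_ge_expansion[OF assms(3,1,4,5,6) _ _ assms(7)])
      (auto simp: t_def)
  ultimately obtain q where "q \<in> W_set c d0 - {0}"
    and gain: "(\<delta> - 1 / t) * real (card F) / real (c * d0)
                 \<le> (\<Sum>i\<in>{i \<in> {..<n}. flip_weight c t m nbr C0 x i = q}. flip_gain F i)"
    using exists_flip_level_ge[OF reg assms(1) \<open>1 \<le> d0\<close>] unfolding t_def by blast
  moreover have "(\<delta> - 1 / t) * real (card F) / real (c * d0)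
      = ((t - 1 / \<delta>) * \<delta>) / (2 * real c * t\<^sup>2) * real (card F)"
    unfolding t_def using \<open>0 < \<delta>\<close> \<open>1 \<le> d0\<close> assms(1) by (simp add: field_simps power2_eq_square)
  ultimately show ?thesis
    using card_flips_deter_flip[of n c t m nbr C0 x q y]
    unfolding t_def F_def left_diff_distrib by (intro bexI[of _ q]) auto
qed

end
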